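(* With $d$, $k$, TT-cores $\mathcal{G}_i\in\mathbb{R}^{r_{i-1}\times n_i\times r_i}$ ($r_0=r_d=1$), CountSketch matrices $S_i\in\mathbb{R}^{m\times n_i}$ ($i\ne k$), and TensorSketch matrices $S_{<k}$, $S_{>k}$ as described in the context, the following hold (for $2\le k$ in the first identity and $k\le d-1$ in the second): $$FS_{<k}G_{<k}=\Big[(\mathcal{G}_1\times_2FS_1)\star(\mathcal{G}_2\times_2FS_2)\star\cdots\star(\mathcal{G}_{k-1}\times_2FS_{k-1})\Big]^{\mathrm{L}},$$ $$FS_{>k}G_{>k}^\top=\Big[\Big((\mathcal{G}_{k+1}\times_2FS_{k+1})\star(\mathcal{G}_{k+2}\times_2FS_{k+2})\star\cdots\star(\mathcal{G}_d\times_2FS_d)\Big)^{\mathrm{R}}\Big]^\top,$$ where $F\in\mathbb{C}^{m\times m}$ is the Fourier transform matrix and $^\top$ is the (non-conjugate) transpose.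
   Context: Notation: $[n]=\{1,\dots,n\}$. Index convention: a tuple $(i_1,\dots,i_p)\in[n_{j_1}]\times\cdots\times[n_{j_p}]$ is identified with $1+\sum_{s=1}^p(i_s-1)\prod_{t<s}n_{j_t}$. For $i\in[d]\setminus\{k\}$, $h_i:[n_i]\to[m]$, $v_i:[n_i]\to\{-1,1\}$ are arbitrary and $S_i\in\mathbb{R}^{m\times n_i}$ is the CountSketch matrix $S_i(j,l)=v_i(l)$ if $j=h_i(l)$, else $0$. $S_{<k}$ (resp. $S_{>k}$) is the TensorSketch matrix built from $\{(h_i,v_i)\}_{i<k}$ (resp. $i>k$): for a family $(h_{j_1},v_{j_1}),\dots,(h_{j_p},v_{j_p})$ it is $S(j,i)=v(i)$ if $j=h(i)$ and $0$ otherwise, where for $i\leftrightarrow(i_1,\dots,i_p)$, $h(i)=\big(\sum_s(h_{j_s}(i_s)-1)\bmod m\big)+1$ and $v(i)=\prod_s v_{j_s}(i_s)$. For $\mathcal{G}\in\mathbb{C}^{a\times n\times b}$, $\mathcal{G}(i)=\mathcal{G}(:,i,:)\in\mathbb{C}^{a\times b}$. $G_{<k}\in\mathbb{R}^{n_1\cdots n_{k-1}\times r_{k-1}}$ has row indexed by $(i_1,\dots,i_{k-1})$ equal to $\mathcal{G}_1(i_1)\cdots\mathcal{G}_{k-1}(i_{k-1})$; $G_{>k}\in\mathbb{R}^{r_k\times n_{k+1}\cdots n_d}$ has column indexed by $(i_{k+1},\dots,i_d)$ equal to $\mathcal{G}_{k+1}(i_{k+1})\cdots\mathcal{G}_d(i_d)$.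 Mode-2 product: for $\mathcal{G}\in\mathbb{C}^{a\times n\times b}$ and $M\in\mathbb{C}^{m\times n}$, $(\mathcal{G}\times_2M)(i_1,j,i_3)=\sum_{l=1}^n\mathcal{G}(i_1,l,i_3)M(j,l)$, a tensor of size $a\times m\times b$. Slice-wise product: for $\mathcal{A}\in\mathbb{C}^{r_1\times m\times r_2}$, $\mathcal{B}\in\mathbb{C}^{r_2\times m\times r_3}$, $\mathcal{A}\star\mathcal{B}\in\mathbb{C}^{r_1\times m\times r_3}$ with $(\mathcal{A}\star\mathcal{B})(i)=\mathcal{A}(i)\mathcal{B}(i)$ for all $i\in[m]$. Left unfolding of $\mathcal{A}\in\mathbb{C}^{n_1\times n_2\times n_3}$: $\mathcal{A}^{\mathrm L}\in\mathbb{C}^{n_1n_2\times n_3}$, $\mathcal{A}^{\mathrm L}(i_1+(i_2-1)n_1,i_3)=\mathcal{A}(i_1,i_2,i_3)$. Right unfolding: $\mathcal{A}^{\mathrm R}\in\mathbb{C}^{n_1\times n_2n_3}$, $\mathcal{A}^{\mathrm R}(i_1,i_2+(i_3-1)n_2)=\mathcal{A}(i_1,i_2,i_3)$. Fourier transform matrix: $F(s,j)=w^{(s-1)(j-1)}$, $w=e^{-\mathbf{i}2\pi/m}$. *)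

theory Defs
  imports Complex_Main
begin

text \<open>All matrices and 3-way tensors are represented as functions on natural-number
indices, using the paper's 1-based indexing; all sums range only over the stated
index ranges, so values outside the ranges are irrelevant.\<close>

type_synonym 'a mtx = "nat \<Rightarrow> nat \<Rightarrow> 'a"
type_synonym 'a tensor3 = "nat \<Rightarrow> nat \<Rightarrow> nat \<Rightarrow> 'a"

definition mmul :: "nat \<Rightarrow> 'a::comm_semiring_0 mtx \<Rightarrow> 'a mtx \<Rightarrow> 'a mtx" where
  "mmul p A B = (\<lambda>i j. \<Sum>l=1..p. A i l * B l j)"

definition mtranspose :: "'a mtx \<Rightarrow> 'a mtx" where
  "mtranspose A = (\<lambda>i j. A j i)"

definition fourier :: "nat \<Rightarrow> complex mtx" where
  "fourier m = (\<lambda>s j. (exp (- \<i> * complex_of_real (2 * pi / real m))) ^ ((s - 1) * (j - 1)))"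

definition countsketch :: "(nat \<Rightarrow> nat) \<Rightarrow> (nat \<Rightarrow> real) \<Rightarrow> real mtx" where
  "countsketch h v = (\<lambda>j l. if j = h l then v l else 0)"

text \<open>Index convention: a tuple (i_1,...,i_p) for the modes js = [j_1,...,j_p] is identified
with 1 + sum_s (i_s - 1) prod_{t<s} n_{j_t}.\<close>
definition index_of_tuple :: "(nat \<Rightarrow> nat) \<Rightarrow> nat list \<Rightarrow> nat list \<Rightarrow> nat" where
  "index_of_tuple n js ts =
     1 + (\<Sum>s<length js. (ts ! s - 1) * prod_list (map n (take s js)))"

definition tuple_of_index :: "(nat \<Rightarrow> nat) \<Rightarrow> nat list \<Rightarrow> nat \<Rightarrow> nat list" where
  "tuple_of_index n js i =
     map (\<lambda>s. ((i - 1) div prod_list (map n (take s js))) mod n (js ! s) + 1) [0..<length js]"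

definition tensorsketch ::
  "nat \<Rightarrow> (nat \<Rightarrow> nat \<Rightarrow> nat) \<Rightarrow> (nat \<Rightarrow> nat \<Rightarrow> real) \<Rightarrow> (nat \<Rightarrow> nat) \<Rightarrow> nat list \<Rightarrow> real mtx" where
  "tensorsketch m h v n js = (\<lambda>j i.
     (let p = zip js (tuple_of_index n js i) in
      if j = (sum_list (map (\<lambda>(a, b). h a b - 1) p)) mod m + 1
      then prod_list (map (\<lambda>(a, b). v a b) p) else 0))"

fun slice_chain :: "(nat \<Rightarrow> nat) \<Rightarrow> (nat \<Rightarrow> 'a::comm_semiring_0 tensor3) \<Rightarrow> (nat \<times> nat) list \<Rightarrow> 'a mtx" where
  "slice_chain r G [] = (\<lambda>a b. 0)"
| "slice_chain r G [(j, i)] = (\<lambda>a b. G j a i b)"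
| "slice_chain r G ((j, i) # p # ps) = mmul (r j) (\<lambda>a b. G j a i b) (slice_chain r G (p # ps))"

text \<open>G_{<k}: row indexed by (i_1,...,i_{k-1}) equals G_1(i_1)...G_{k-1}(i_{k-1}) (a 1 x r_{k-1} row).\<close>
definition G_lt :: "(nat \<Rightarrow> nat) \<Rightarrow> (nat \<Rightarrow> real tensor3) \<Rightarrow> (nat \<Rightarrow> nat) \<Rightarrow> nat \<Rightarrow> real mtx" where
  "G_lt r G n k = (\<lambda>i c. slice_chain r G (zip [1..<k] (tuple_of_index n [1..<k] i)) 1 c)"

text \<open>G_{>k}: column indexed by (i_{k+1},...,i_d) equals G_{k+1}(i_{k+1})...G_d(i_d) (an r_k x 1 column).\<close>
definition G_gt :: "(nat \<Rightarrow> nat) \<Rightarrow> (nat \<Rightarrow> real tensor3) \<Rightarrow> (nat \<Rightarrow> nat) \<Rightarrow> nat \<Rightarrow> nat \<Rightarrow> real mtx" where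
  "G_gt r G n k d = (\<lambda>c i. slice_chain r G (zip [k+1..<d+1] (tuple_of_index n [k+1..<d+1] i)) c 1)"

definition mode2 :: "nat \<Rightarrow> 'a::comm_semiring_0 tensor3 \<Rightarrow> 'a mtx \<Rightarrow> 'a tensor3" where
  "mode2 n T M = (\<lambda>i1 j i3. \<Sum>l=1..n. T i1 l i3 * M j l)"

definition slicewise :: "nat \<Rightarrow> 'a::comm_semiring_0 tensor3 \<Rightarrow> 'a tensor3 \<Rightarrow> 'a tensor3" where
  "slicewise p A B = (\<lambda>i1 i i3. \<Sum>c=1..p. A i1 i c * B c i i3)"

fun star_chain :: "(nat \<Rightarrow> nat) \<Rightarrow> (nat \<Rightarrow> 'a::comm_semiring_0 tensor3) \<Rightarrow> nat list \<Rightarrow> 'a tensor3" where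
  "star_chain r T [] = (\<lambda>a b c. 0)"
| "star_chain r T [j] = T j"
| "star_chain r T (j # j' # js) = slicewise (r j) (T j) (star_chain r T (j' # js))"

definition unfoldL :: "nat \<Rightarrow> 'a tensor3 \<Rightarrow> 'a mtx" where
  "unfoldL n1 A = (\<lambda>row col. A ((row - 1) mod n1 + 1) ((row - 1) div n1 + 1) col)"

definition unfoldR :: "nat \<Rightarrow> 'a tensor3 \<Rightarrow> 'a mtx" where
  "unfoldR n2 A = (\<lambda>row col. A row ((col - 1) mod n2 + 1) ((col - 1) div n2 + 1))"

end

theory Submission
  imports Defs
begin

text \<open>Applying F to a CountSketch matrix replaces the hash value h(l) by the character
s \<mapsto> w^((s-1)(h(l)-1)), and since w^m = 1 the reduction mod m in the TensorSketch hash
disappears: the column of F S indexed by a tuple (i_1,...,i_p) is the entrywise product of the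
columns i_j of the matrices F S_j. Summing this product against the slice product
G_1(i_1)...G_p(i_p) over the mixed-radix index factorizes one mode at a time, and each factor
is a slice of the core G_j \<times>_2 F S_j, so the sum is their slice-wise product.\<close>

lemma sum_lessThan_mult_mod_div:
  fixes g :: "nat \<Rightarrow> nat \<Rightarrow> 'a::comm_monoid_add"
  shows "(\<Sum>i<A * B. g (i mod A) (i div A)) = (\<Sum>b<B. \<Sum>a<A. g a b)"
proof (induction B)
  case 0
  then show ?case by simp
next
  case (Suc B)
  have "(\<Sum>i<A * Suc B. g (i mod A) (i div A))
      = (\<Sum>i<A * B. g (i mod A) (i div A)) + (\<Sum>i\<in>{A * B..<A * B + A}. g (i mod A) (i div A))"
    by (simp add: lessThan_atLeast0 sum.atLeastLessThan_concat add.commute)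
  also have "(\<Sum>i\<in>{A * B..<A * B + A}. g (i mod A) (i div A)) = (\<Sum>a<A. g (a mod A) (B + a div A))"
    using sum.shift_bounds_nat_ivl[of "\<lambda>i. g (i mod A) (i div A)" 0 "A * B" A]
    by (simp add: lessThan_atLeast0 add.commute)
  also have "\<dots> = (\<Sum>a<A. g a B)"
    by (intro sum.cong) auto
  finally show ?case
    using Suc by simp
qed

lemma tuple_of_index_Cons:
  "tuple_of_index n (j # js) i = ((i - 1) mod n j + 1) # tuple_of_index n js ((i - 1) div n j + 1)"
  by (simp add: tuple_of_index_def upt_conv_Cons map_Suc_upt[symmetric] div_mult2_eq del: upt_Suc)

lemma sum_tuple_of_index_Cons:
  "(\<Sum>i=1..prod_list (map n (j # js)). f (tuple_of_index n (j # js) i))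
   = (\<Sum>b=1..prod_list (map n js). \<Sum>a=1..n j. f (a # tuple_of_index n js b))"
  using sum_lessThan_mult_mod_div[of "\<lambda>a b. f (Suc a # tuple_of_index n js (Suc b))" "n j"]
  by (simp add: sum.atLeast1_atMost_eq tuple_of_index_Cons)

lemma sum_product_swap:
  fixes u w :: "'i \<Rightarrow> 'a::comm_semiring_0"
  shows "(\<Sum>b\<in>B. \<Sum>a\<in>A. u a * w b * (\<Sum>c\<in>C. p a c * q b c))
       = (\<Sum>c\<in>C. (\<Sum>a\<in>A. p a c * u a) * (\<Sum>b\<in>B. w b * q b c))"
proof -
  have "(\<Sum>b\<in>B. \<Sum>a\<in>A. u a * w b * (\<Sum>c\<in>C. p a c * q b c))
      = (\<Sum>b\<in>B. \<Sum>a\<in>A. \<Sum>c\<in>C. p a c * u a * (w b * q b c))"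
    by (simp add: sum_distrib_left mult_ac)
  also have "\<dots> = (\<Sum>a\<in>A. \<Sum>c\<in>C. \<Sum>b\<in>B. p a c * u a * (w b * q b c))"
    by (subst sum.swap) (intro sum.cong refl sum.swap)
  also have "\<dots> = (\<Sum>c\<in>C. \<Sum>a\<in>A. \<Sum>b\<in>B. p a c * u a * (w b * q b c))"
    by (rule sum.swap)
  also have "\<dots> = (\<Sum>c\<in>C. (\<Sum>a\<in>A. p a c * u a) * (\<Sum>b\<in>B. w b * q b c))"
    by (simp add: sum_product)
  finally show ?thesis .
qed

lemma sum_weighted_slice_chain:
  fixes G :: "nat \<Rightarrow> 'a::comm_semiring_1 tensor3" and M :: "nat \<Rightarrow> 'a mtx"
  assumes "js \<noteq> []"
  shows "(\<Sum>i=1..prod_list (map n js).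
            prod_list (map (\<lambda>(a, t). M a s t) (zip js (tuple_of_index n js i)))
            * slice_chain r G (zip js (tuple_of_index n js i)) x y)
         = star_chain r (\<lambda>a. mode2 (n a) (G a) (M a)) js x s y"
  using assms
proof (induction js arbitrary: x y rule: induct_list012)
  case 1
  then show ?case by simp
next
  case (2 j)
  show ?case
    by (subst sum_tuple_of_index_Cons) (simp add: tuple_of_index_def mode2_def mult.commute)
next
  case (3 j j' js)
  let ?T = "\<lambda>a. mode2 (n a) (G a) (M a)"
  let ?tp = "tuple_of_index n (j' # js)"
  define W where "W b = prod_list (map (\<lambda>(a, t). M a s t) (zip (j' # js) (?tp b)))" for b
  define C where "C b = slice_chain r G (zip (j' # js) (?tp b))" for b
  have IH: "(\<Sum>b=1..prod_list (map n (j' # js)). W b * C b c y) = star_chain r ?T (j' # js) c s y" for c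
    using "3.IH"(2) unfolding W_def C_def by simp
  have "(\<Sum>i=1..prod_list (map n (j # j' # js)).
            prod_list (map (\<lambda>(a, t). M a s t) (zip (j # j' # js) (tuple_of_index n (j # j' # js) i)))
            * slice_chain r G (zip (j # j' # js) (tuple_of_index n (j # j' # js) i)) x y)
      = (\<Sum>b=1..prod_list (map n (j' # js)). \<Sum>a=1..n j.
            M j s a * W b * (\<Sum>c=1..r j. G j x a c * C b c y))"
    by (subst sum_tuple_of_index_Cons) (simp add: W_def C_def tuple_of_index_Cons mmul_def mult.assoc)
  also have "\<dots> = (\<Sum>c=1..r j. (\<Sum>a=1..n j. G j x a c * M j s a)
                    * (\<Sum>b=1..prod_list (map n (j' # js)). W b * C b c y))"
    by (rule sum_product_swap)
  also have "\<dots> = star_chain r ?T (j # j' # js) x s y"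
    unfolding IH by (simp add: slicewise_def mode2_def)
  finally show ?case .
qed

lemma mmul_countsketch:
  fixes A :: "'a::{comm_ring_1, real_algebra_1} mtx"
  assumes "h l \<in> {1..m}"
  shows "mmul m A (\<lambda>j l. of_real (countsketch h v j l)) s l = A s (h l) * of_real (v l)"
proof -
  have "mmul m A (\<lambda>j l. of_real (countsketch h v j l)) s l
      = (\<Sum>j=1..m. if j = h l then A s j * of_real (v l) else 0)"
    unfolding mmul_def countsketch_def by (intro sum.cong) auto
  then show ?thesis
    using assms by simp
qed

lemma mmul_tensorsketch:
  fixes A :: "'a::{comm_ring_1, real_algebra_1} mtx"
  assumes "1 \<le> m"
  shows "mmul m A (\<lambda>j i. of_real (tensorsketch m h v n js j i)) s i
    = A s (sum_list (map (\<lambda>(a, t). h a t - 1) (zip js (tuple_of_index n js i))) mod m + 1)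
      * of_real (prod_list (map (\<lambda>(a, t). v a t) (zip js (tuple_of_index n js i))))"
    (is "_ = A s (?H mod m + 1) * of_real ?V")
proof -
  have "mmul m A (\<lambda>j i. of_real (tensorsketch m h v n js j i)) s i
      = (\<Sum>j=1..m. if j = ?H mod m + 1 then A s j * of_real ?V else 0)"
    unfolding mmul_def tensorsketch_def Let_def by (intro sum.cong) auto
  moreover have "?H mod m + 1 \<in> {1..m}"
    using assms by (simp add: Suc_leI)
  ultimately show ?thesis
    by simp
qed

lemma power_mod_eq_power:
  fixes w :: "'a::monoid_mult"
  assumes "w ^ m = 1"
  shows "w ^ (a mod m) = w ^ a"
proof -
  have "w ^ a = w ^ (a mod m) * (w ^ m) ^ (a div m)"
    by (metis power_add power_mult mod_mult_div_eq)
  then show ?thesis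
    using assms by simp
qed

lemma fourier_Suc_mod:
  assumes "1 \<le> m"
  shows "fourier m s (j mod m + 1) = fourier m s (j + 1)"
proof -
  define w where "w = exp (- \<i> * complex_of_real (2 * pi / real m))"
  have "w ^ m = exp (of_nat m * (- \<i> * complex_of_real (2 * pi / real m)))"
    unfolding w_def by (rule exp_of_nat_mult[symmetric])
  also have "\<dots> = 1"
    using assms by (simp add: field_simps exp_minus)
  finally have "w ^ m = 1" .
  then have "w ^ ((s - 1) * (j mod m)) = w ^ ((s - 1) * j)"
    by (metis power_mod_eq_power mod_mult_right_eq)
  then show ?thesis
    by (simp add: fourier_def w_def)
qed

lemma fourier_sum_list:
  "fourier m s (sum_list (map f p) + 1) * of_real (prod_list (map g p))
   = prod_list (map (\<lambda>x. fourier m s (f x + 1) * of_real (g x)) p)"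
  by (induction p) (simp_all add: fourier_def distrib_left power_add)

lemma fourier_tensorsketch:
  assumes "1 \<le> m"
  shows "mmul m (fourier m) (\<lambda>j i. complex_of_real (tensorsketch m h v n js j i)) s i
    = prod_list (map (\<lambda>(a, t). fourier m s (h a t) * complex_of_real (v a t))
        (zip js (tuple_of_index n js i)))"
proof -
  let ?p = "zip js (tuple_of_index n js i)"
  have "mmul m (fourier m) (\<lambda>j i. complex_of_real (tensorsketch m h v n js j i)) s i
      = fourier m s (sum_list (map (\<lambda>(a, t). h a t - 1) ?p) + 1)
        * of_real (prod_list (map (\<lambda>(a, t). v a t) ?p))"
    by (simp only: mmul_tensorsketch[OF assms] fourier_Suc_mod[OF assms])
  also have "\<dots> = prod_list (map (\<lambda>x. fourier m s ((case x of (a, t) \<Rightarrow> h a t - 1) + 1)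
                      * of_real (case x of (a, t) \<Rightarrow> v a t)) ?p)"
    by (rule fourier_sum_list)
  also have "\<dots> = prod_list (map (\<lambda>(a, t). fourier m s (h a t) * complex_of_real (v a t)) ?p)"
    by (simp add: split_def fourier_def)
  finally show ?thesis .
qed

lemma of_real_slice_chain:
  "of_real (slice_chain r G p x y) = slice_chain r (\<lambda>i a l b. of_real (G i a l b)) p x y"
  by (induction r G p arbitrary: x y rule: slice_chain.induct) (simp_all add: mmul_def)

lemma mode2_cong:
  "(\<And>j l. l \<in> {1..n} \<Longrightarrow> M j l = M' j l) \<Longrightarrow> mode2 n T M = mode2 n T M'"
  unfolding mode2_def by (intro ext sum.cong) auto

lemma star_chain_cong:
  "(\<And>a. a \<in> set js \<Longrightarrow> T a = T' a) \<Longrightarrow> star_chain r T js = star_chain r T' js"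
  by (induction r T js rule: star_chain.induct) simp_all

lemma sum_fourier_tensorsketch_slice_chain:
  fixes G :: "nat \<Rightarrow> real tensor3"
  assumes m: "1 \<le> m" and "js \<noteq> []"
    and h: "\<forall>a\<in>set js. \<forall>l\<in>{1..n a}. h a l \<in> {1..m}"
  shows "(\<Sum>i=1..prod_list (map n js).
            mmul m (fourier m) (\<lambda>j i. complex_of_real (tensorsketch m h v n js j i)) s i
            * complex_of_real (slice_chain r G (zip js (tuple_of_index n js i)) x y))
    = star_chain r (\<lambda>a. mode2 (n a) (\<lambda>x l y. complex_of_real (G a x l y))
        (mmul m (fourier m) (\<lambda>j l. complex_of_real (countsketch (h a) (v a) j l)))) js x s y"
proof -
  let ?W = "\<lambda>a s t. fourier m s (h a t) * complex_of_real (v a t)"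
  let ?Gc = "\<lambda>a x l y. complex_of_real (G a x l y)"
  have "(\<Sum>i=1..prod_list (map n js).
            mmul m (fourier m) (\<lambda>j i. complex_of_real (tensorsketch m h v n js j i)) s i
            * complex_of_real (slice_chain r G (zip js (tuple_of_index n js i)) x y))
      = star_chain r (\<lambda>a. mode2 (n a) (?Gc a) (?W a)) js x s y"
    unfolding fourier_tensorsketch[OF m] of_real_slice_chain
    by (rule sum_weighted_slice_chain) fact
  also have "star_chain r (\<lambda>a. mode2 (n a) (?Gc a) (?W a)) js
      = star_chain r (\<lambda>a. mode2 (n a) (?Gc a)
          (mmul m (fourier m) (\<lambda>j l. complex_of_real (countsketch (h a) (v a) j l)))) js"
    using h by (intro star_chain_cong mode2_cong) (simp add: mmul_countsketch)
  finally show ?thesis .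
qed

theorem theorem2:
  fixes d k m :: nat and n r :: "nat \<Rightarrow> nat"
    and G :: "nat \<Rightarrow> real tensor3"
    and h :: "nat \<Rightarrow> nat \<Rightarrow> nat" and v :: "nat \<Rightarrow> nat \<Rightarrow> real"
  assumes k: "1 \<le> k" "k \<le> d"
    and m: "1 \<le> m"
    and n_pos: "\<forall>i\<in>{1..d}. 1 \<le> n i"
    and r_pos: "\<forall>i\<in>{0..d}. 1 \<le> r i"
    and r0: "r 0 = 1" and rd: "r d = 1"
    and hv: "\<forall>i\<in>{1..d} - {k}. \<forall>l\<in>{1..n i}. h i l \<in> {1..m} \<and> v i l \<in> {-1, 1}"
  defines "F \<equiv> fourier m"
    and "FS \<equiv> \<lambda>i. mmul m (fourier m) (\<lambda>j l. complex_of_real (countsketch (h i) (v i) j l))"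
    and "Gc \<equiv> \<lambda>i a l b. complex_of_real (G i a l b)"
  shows
    "(2 \<le> k \<longrightarrow>
       (\<forall>s\<in>{1..m}. \<forall>c\<in>{1..r (k - 1)}.
          mmul (\<Prod>i\<in>{1..<k}. n i)
               (mmul m F (\<lambda>j i. complex_of_real (tensorsketch m h v n [1..<k] j i)))
               (\<lambda>i c. complex_of_real (G_lt r G n k i c)) s c
          = unfoldL (r 0) (star_chain r (\<lambda>i. mode2 (n i) (Gc i) (FS i)) [1..<k]) s c))
     \<and> (k \<le> d - 1 \<longrightarrow>
       (\<forall>s\<in>{1..m}. \<forall>c\<in>{1..r k}.
          mmul (\<Prod>i\<in>{k+1..d}. n i)
               (mmul m F (\<lambda>j i. complex_of_real (tensorsketch m h v n [k+1..<d+1] j i)))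
               (mtranspose (\<lambda>c i. complex_of_real (G_gt r G n k d c i))) s c
          = mtranspose (unfoldR m (star_chain r (\<lambda>i. mode2 (n i) (Gc i) (FS i)) [k+1..<d+1])) s c))"
proof -
  have sketch: "(\<Sum>i=1..prod_list (map n js).
            mmul m F (\<lambda>j i. complex_of_real (tensorsketch m h v n js j i)) s i
            * complex_of_real (slice_chain r G (zip js (tuple_of_index n js i)) x y))
      = star_chain r (\<lambda>i. mode2 (n i) (Gc i) (FS i)) js x s y"
    if "js \<noteq> []" "set js \<subseteq> {1..d} - {k}" for js s x y
    unfolding F_def FS_def Gc_def
    by (rule sum_fourier_tensorsketch_slice_chain[OF m that(1)]) (use that hv in blast)
  have lt: "[1..<k] \<noteq> [] \<and> set [1..<k] \<subseteq> {1..d} - {k}" if "2 \<le> k"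
    using that k by auto
  have gt: "[k+1..<d+1] \<noteq> [] \<and> set [k+1..<d+1] \<subseteq> {1..d} - {k}" if "k \<le> d - 1"
    using that k by auto
  have "(\<Prod>i\<in>{1..<k}. n i) = prod_list (map n [1..<k])"
    "(\<Prod>i\<in>{k+1..d}. n i) = prod_list (map n [k+1..<d+1])"
    by (simp_all add: prod.distinct_set_conv_list[symmetric] atLeastLessThanSuc_atLeastAtMost del: upt_Suc)
  \<comment> \<open>The unfoldings are plain re-indexings here, as r 0 = 1 and s \<le> m.\<close>
  then show ?thesis
    using sketch[of "[1..<k]" _ 1] sketch[of "[k+1..<d+1]" _ _ 1] lt gt
    by (auto simp: mmul_def[of "prod_list _"] G_lt_def G_gt_def mtranspose_def unfoldL_def unfoldR_def r0
        del: upt_Suc)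
qed

end
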